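(* Let $A_*,R_*,\gamma>0$, let $r_k=R_*k^\gamma$, let $a_{1,1}=A_*$ and $a_{k,\ell}=0$ for $(k,\ell)\neq(1,1)$, and let $s_k\ge0$ satisfy: for every $\mu\ge0$, $\sum_k k^\mu s_k<\infty$, with $\mathfrak s_1:=\sum_k ks_k$. Consider the system $\frac{d}{dt}c_1=-A_*c_1^2+s_1-r_1c_1$, $\frac{d}{dt}c_2=\frac{A_*}{2}c_1^2+s_2-r_2c_2$, $\frac{d}{dt}c_k=s_k-r_kc_k$ $(k\ge3)$. Then: (1) Its unique nonnegative equilibrium is $$Q_1=\tfrac12\sqrt{\tfrac{r_1^2}{A_*^2}+\tfrac{4s_1}{A_*}}-\tfrac{r_1}{2A_*},\qquad Q_2=\tfrac{A_*}{2r_2}Q_1^2+\tfrac{s_2}{r_2},\qquad Q_k=\tfrac{s_k}{r_k}\ (k\ge3).$$ (2) For every nonnegative initial datum $c^{\mathrm{in}}$ with $\sum_k kc^{\mathrm{in}}_k<\infty$ and every $\mu\ge1$, the solution satisfies $\sum_{k\ge1}k^\mu|c_k(t)-Q_k|\le Ke^{-\kappa t}$ for all $t\ge1$, with $\kappa=\min\{\frac{A_*}{2\alpha},\frac{r_2}{2},\frac{3^\gamma}{2}R_*\}$, where $\alpha=(r_1^2/A_*^2+4s_1/A_* )^{-1/2}$, and $K$ a constant depending on $c^{\mathrm{in}}$, $\mu$ and the coefficients. (3) If moreover $A_*s_1\ge4R_*^2$, then for every $\mu\ge1$, every $\beta\in[0,1]$ and every nonnegative sequence $c$ (for which the sum converges),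 $2A_*(C_\mu+2)\sum_{\ell\ge1}\ell^{\mu+\beta}(c_\ell+Q_\ell)-R_*\ge(3(C_\mu+2)-1)R_*>0$, where $C_\mu=2^{\max\{\mu-2,0\}}\max\{\mu,\mu(\mu-1)\}$.
   Context: $\mathbb N=\{1,2,\dots\}$. Solutions of the system are understood as nonnegative classical solutions on $[0,\infty)$ with $c_k(0)=c_k^{\mathrm{in}}$. *)

theory Defs
  imports "HOL-Analysis.Analysis"
begin

text \<open>Sequences are indexed by nat; only indices k >= 1 are meaningful (index 0 is ignored).\<close>

definition rate :: "real \<Rightarrow> real \<Rightarrow> nat \<Rightarrow> real" where
  "rate Rs \<gamma> k = Rs * real k powr \<gamma>"

definition rhs :: "real \<Rightarrow> real \<Rightarrow> real \<Rightarrow> (nat \<Rightarrow> real) \<Rightarrow> (nat \<Rightarrow> real) \<Rightarrow> nat \<Rightarrow> real" where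
  "rhs A Rs \<gamma> s c k =
     (if k = 1 then - A * (c 1)\<^sup>2 + s 1 - rate Rs \<gamma> 1 * c 1
      else if k = 2 then A / 2 * (c 1)\<^sup>2 + s 2 - rate Rs \<gamma> 2 * c 2
      else s k - rate Rs \<gamma> k * c k)"

definition is_equilibrium :: "real \<Rightarrow> real \<Rightarrow> real \<Rightarrow> (nat \<Rightarrow> real) \<Rightarrow> (nat \<Rightarrow> real) \<Rightarrow> bool" where
  "is_equilibrium A Rs \<gamma> s q \<longleftrightarrow> (\<forall>k\<ge>1. rhs A Rs \<gamma> s q k = 0)"

definition nonneg_seq :: "(nat \<Rightarrow> real) \<Rightarrow> bool" where
  "nonneg_seq q \<longleftrightarrow> (\<forall>k\<ge>1. q k \<ge> 0)"

definition is_solution :: "real \<Rightarrow> real \<Rightarrow> real \<Rightarrow> (nat \<Rightarrow> real) \<Rightarrow> (nat \<Rightarrow> real)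
    \<Rightarrow> (real \<Rightarrow> nat \<Rightarrow> real) \<Rightarrow> bool" where
  "is_solution A Rs \<gamma> s cin c \<longleftrightarrow>
     (\<forall>k\<ge>1. c 0 k = cin k) \<and>
     (\<forall>t\<ge>0. \<forall>k\<ge>1. c t k \<ge> 0) \<and>
     (\<forall>t\<ge>0. \<forall>k\<ge>1. ((\<lambda>\<tau>. c \<tau> k) has_real_derivative rhs A Rs \<gamma> s (c t) k) (at t within {0..}))"

definition Qeq :: "real \<Rightarrow> real \<Rightarrow> real \<Rightarrow> (nat \<Rightarrow> real) \<Rightarrow> nat \<Rightarrow> real" where
  "Qeq A Rs \<gamma> s k =
     (let r = rate Rs \<gamma>;
          Q1 = 1/2 * sqrt ((r 1)\<^sup>2 / A\<^sup>2 + 4 * s 1 / A) - r 1 / (2 * A)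
      in if k = 1 then Q1
         else if k = 2 then A / (2 * r 2) * Q1\<^sup>2 + s 2 / r 2
         else s k / r k)"

definition alpha_const :: "real \<Rightarrow> real \<Rightarrow> real \<Rightarrow> (nat \<Rightarrow> real) \<Rightarrow> real" where
  "alpha_const A Rs \<gamma> s = 1 / sqrt ((rate Rs \<gamma> 1)\<^sup>2 / A\<^sup>2 + 4 * s 1 / A)"

definition kappa_const :: "real \<Rightarrow> real \<Rightarrow> real \<Rightarrow> (nat \<Rightarrow> real) \<Rightarrow> real" where
  "kappa_const A Rs \<gamma> s =
     Min {A / (2 * alpha_const A Rs \<gamma> s), rate Rs \<gamma> 2 / 2, 3 powr \<gamma> / 2 * Rs}"

definition C_const :: "real \<Rightarrow> real" where
  "C_const \<mu> = 2 powr (max (\<mu> - 2) 0) * max \<mu> (\<mu> * (\<mu> - 1))"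

end

theory Submission
  imports Defs
begin

text \<open>The system is triangular: the monomer equation is a scalar Riccati equation with stable
  root \<open>Q 1\<close>, and every other mode is a linear equation with damping \<open>r k\<close>. For each mode a
  weighted square \<open>(c t k - Q k)\<^sup>2 exp (2 \<kappa> t)\<close> is a Lyapunov function; for the dimer it needs a
  correction term because the dimer is forced by the monomers, whose deviation decays strictly faster
  than \<open>\<kappa>\<close>. In the weighted sum over \<open>k\<close>, half of the decay \<open>exp (- r k t)\<close> with
  \<open>r k = Rs k\<^sup>\<gamma>\<close> absorbs any polynomial weight. Part (3) only uses the term \<open>k = 1\<close> and
  \<open>2 A Q 1 = sqrt (Rs\<^sup>2 + 4 A s 1) - Rs \<ge> 3 Rs\<close>.\<close>

section \<open>Exponential decay for scalar differential inequalities\<close>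

lemma deriv_nonpos_imp_le_initial:
  fixes f f' :: "real \<Rightarrow> real"
  assumes deriv: "\<And>t. t \<ge> 0 \<Longrightarrow> (f has_real_derivative f' t) (at t within {0..})"
    and nonpos: "\<And>t. t \<ge> 0 \<Longrightarrow> f' t \<le> 0" and "t \<ge> 0"
  shows "f t \<le> f 0"
proof (rule DERIV_nonpos_imp_decreasing_open[OF \<open>t \<ge> 0\<close>])
  fix x :: real assume x: "0 < x" "x < t"
  then have "at x within {0..} = at x" by (intro at_within_interior) simp
  then show "\<exists>y. DERIV f x :> y \<and> y \<le> 0" using deriv[of x] nonpos[of x] x by auto
next
  have "continuous_on {0..} f"
    unfolding continuous_on_eq_continuous_within using deriv DERIV_continuous by (metis atLeast_iff)
  then show "continuous_on {0..t} f" by (rule continuous_on_subset) auto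
qed

lemma abs_le_of_sq_exp_le:
  fixes d b D t :: real
  assumes "d\<^sup>2 * exp (2 * b * t) \<le> D\<^sup>2" "D \<ge> 0"
  shows "\<bar>d\<bar> \<le> D * exp (- b * t)"
proof -
  have "(\<bar>d\<bar> * exp (b * t))\<^sup>2 = d\<^sup>2 * exp (2 * b * t)"
    by (simp add: power_mult_distrib power2_eq_square algebra_simps flip: exp_add)
  then have "\<bar>d\<bar> * exp (b * t) \<le> D"
    using assms by (metis abs_ge_zero exp_ge_zero mult_nonneg_nonneg power2_le_imp_le)
  then show ?thesis by (simp add: exp_minus field_simps)
qed

lemma dissipative_decay:
  fixes x x' :: "real \<Rightarrow> real"
  assumes deriv: "\<And>t. t \<ge> 0 \<Longrightarrow> (x has_real_derivative x' t) (at t within {0..})"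
    and dissipative: "\<And>t. t \<ge> 0 \<Longrightarrow> (x t - q) * x' t \<le> - a * (x t - q)\<^sup>2"
    and "t \<ge> 0"
  shows "\<bar>x t - q\<bar> \<le> \<bar>x 0 - q\<bar> * exp (- a * t)"
proof -
  have "(\<lambda>\<tau>. (x \<tau> - q)\<^sup>2 * exp (2 * a * \<tau>)) t \<le> (\<lambda>\<tau>. (x \<tau> - q)\<^sup>2 * exp (2 * a * \<tau>)) 0"
  proof (rule deriv_nonpos_imp_le_initial[OF _ _ \<open>t \<ge> 0\<close>])
    fix t :: real assume "t \<ge> 0"
    show "((\<lambda>\<tau>. (x \<tau> - q)\<^sup>2 * exp (2 * a * \<tau>)) has_real_derivative
        exp (2 * a * t) * (2 * ((x t - q) * x' t + a * (x t - q)\<^sup>2))) (at t within {0..})"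
      using deriv[OF \<open>t \<ge> 0\<close>]
      by (auto intro!: derivative_eq_intros simp: algebra_simps power2_eq_square)
    show "exp (2 * a * t) * (2 * ((x t - q) * x' t + a * (x t - q)\<^sup>2)) \<le> 0"
      using dissipative[OF \<open>t \<ge> 0\<close>] by (simp add: mult_nonneg_nonpos)
  qed
  then show ?thesis by (intro abs_le_of_sq_exp_le) simp_all
qed

lemma cross_term_le:
  fixes d g r :: real
  assumes "r > 0"
  shows "2 * d * g - r * d\<^sup>2 \<le> g\<^sup>2 / r"
proof -
  have "r * (2 * d * g - r * d\<^sup>2) \<le> g\<^sup>2"
    using zero_le_power2[of "g - r * d"] by (simp add: power2_eq_square algebra_simps)
  then show ?thesis using assms by (simp add: field_simps)
qed

text \<open>The forcing is absorbed into the Lyapunov function through the decreasing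
  correction term \<open>C exp (2 (\<kappa> - a) t)\<close>; half of the damping \<open>r\<close> pays for the
  cross term via \<open>2 d g \<le> r d\<^sup>2 + g\<^sup>2 / r\<close>.\<close>

lemma forced_linear_decay:
  fixes w g :: "real \<Rightarrow> real"
  assumes deriv: "\<And>t. t \<ge> 0 \<Longrightarrow> (w has_real_derivative g t - r * (w t - q)) (at t within {0..})"
    and forcing: "\<And>t. t \<ge> 0 \<Longrightarrow> \<bar>g t\<bar> \<le> G * exp (- a * t)"
    and "r > 0" "\<kappa> \<le> r / 2" "\<kappa> < a" "t \<ge> 0"
  shows "\<bar>w t - q\<bar> \<le> sqrt ((w 0 - q)\<^sup>2 + G\<^sup>2 / (2 * r * (a - \<kappa>))) * exp (- \<kappa> * t)"
proof -
  define C where "C = G\<^sup>2 / (2 * r * (a - \<kappa>))"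
  have "C \<ge> 0" using assms by (simp add: C_def)
  let ?V = "\<lambda>\<tau>. (w \<tau> - q)\<^sup>2 * exp (2 * \<kappa> * \<tau>) + C * exp (2 * (\<kappa> - a) * \<tau>)"
  have "?V t \<le> ?V 0"
  proof (rule deriv_nonpos_imp_le_initial[OF _ _ \<open>t \<ge> 0\<close>])
    fix t :: real assume "t \<ge> 0"
    define d where "d = w t - q"
    show "(?V has_real_derivative exp (2 * \<kappa> * t) * (2 * d * (g t - r * d) + 2 * \<kappa> * d\<^sup>2)
        + C * (exp (2 * (\<kappa> - a) * t) * (2 * (\<kappa> - a)))) (at t within {0..})"
      unfolding d_def using deriv[OF \<open>t \<ge> 0\<close>]
      by (auto intro!: derivative_eq_intros simp: algebra_simps power2_eq_square)
    have "2 * d * g t - r * d\<^sup>2 \<le> (g t)\<^sup>2 / r" using cross_term_le \<open>r > 0\<close> .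
    moreover have "2 * \<kappa> * d\<^sup>2 \<le> r * d\<^sup>2" using \<open>\<kappa> \<le> r / 2\<close> by (intro mult_right_mono) auto
    moreover have "(g t)\<^sup>2 \<le> G\<^sup>2 * exp (- 2 * a * t)"
    proof -
      have "(g t)\<^sup>2 \<le> (G * exp (- a * t))\<^sup>2"
        using forcing[OF \<open>t \<ge> 0\<close>] by (metis abs_ge_zero power2_abs power_mono)
      also have "\<dots> = G\<^sup>2 * exp (- 2 * a * t)"
        by (simp add: power_mult_distrib flip: exp_of_nat_mult)
      finally show ?thesis .
    qed
    then have "(g t)\<^sup>2 / r \<le> G\<^sup>2 / r * exp (- 2 * a * t)"
      using \<open>r > 0\<close> by (simp add: divide_right_mono)
    ultimately have "2 * d * (g t - r * d) + 2 * \<kappa> * d\<^sup>2 \<le> G\<^sup>2 / r * exp (- 2 * a * t)"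
      by (simp add: algebra_simps power2_eq_square)
    then have "exp (2 * \<kappa> * t) * (2 * d * (g t - r * d) + 2 * \<kappa> * d\<^sup>2)
        \<le> exp (2 * \<kappa> * t) * (G\<^sup>2 / r * exp (- 2 * a * t))"
      by (rule mult_left_mono) simp
    also have "\<dots> = G\<^sup>2 / r * exp (2 * (\<kappa> - a) * t)"
      by (simp add: algebra_simps flip: exp_add)
    finally have "exp (2 * \<kappa> * t) * (2 * d * (g t - r * d) + 2 * \<kappa> * d\<^sup>2)
        \<le> G\<^sup>2 / r * exp (2 * (\<kappa> - a) * t)" .
    moreover have "C * (exp (2 * (\<kappa> - a) * t) * (2 * (\<kappa> - a))) = - G\<^sup>2 / r * exp (2 * (\<kappa> - a) * t)"
      unfolding C_def using assms by (simp add: field_simps)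
    ultimately show "exp (2 * \<kappa> * t) * (2 * d * (g t - r * d) + 2 * \<kappa> * d\<^sup>2)
        + C * (exp (2 * (\<kappa> - a) * t) * (2 * (\<kappa> - a))) \<le> 0" by linarith
  qed
  moreover have "0 \<le> C * exp (2 * (\<kappa> - a) * t)" using \<open>C \<ge> 0\<close> by simp
  ultimately have "(w t - q)\<^sup>2 * exp (2 * \<kappa> * t) \<le> (w 0 - q)\<^sup>2 + C" by simp
  then have "(w t - q)\<^sup>2 * exp (2 * \<kappa> * t) \<le> (sqrt ((w 0 - q)\<^sup>2 + C))\<^sup>2"
    using \<open>C \<ge> 0\<close> by simp
  then show ?thesis using \<open>C \<ge> 0\<close> unfolding C_def by (intro abs_le_of_sq_exp_le) auto
qed

lemma exp_neg_split_le:
  fixes \<rho> \<kappa> t :: real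
  assumes "\<kappa> \<ge> 0" "2 * \<kappa> \<le> \<rho>" "t \<ge> 1"
  shows "exp (- \<rho> * t) \<le> exp (- \<rho> / 2) * exp (- \<kappa> * t)"
proof -
  have "2 * \<kappa> * (t - 1 / 2) \<le> \<rho> * (t - 1 / 2)" using assms by (intro mult_right_mono) auto
  moreover have "\<kappa> \<le> \<kappa> * t" using assms by (simp add: mult_le_cancel_left1)
  ultimately have "- \<rho> * t \<le> - \<rho> / 2 + - \<kappa> * t" by (simp add: algebra_simps)
  then show ?thesis by (simp flip: exp_add)
qed

lemma powr_mult_exp_neg_powr_bounded:
  fixes b \<gamma> p :: real
  assumes "b > 0" "\<gamma> > 0"
  obtains M where "M \<ge> 0" "\<And>x. x \<ge> 1 \<Longrightarrow> x powr p * exp (- (b * x powr \<gamma>)) \<le> M"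
proof
  define n :: nat where "n = nat \<lceil>p / \<gamma>\<rceil> + 1"
  have "n \<ge> 1" unfolding n_def by simp
  have "p / \<gamma> \<le> real n" unfolding n_def by linarith
  then have p_le: "p \<le> real n * \<gamma>" using \<open>\<gamma> > 0\<close> by (simp add: field_simps)
  show "(real n / b) ^ n \<ge> 0" using \<open>b > 0\<close> by simp
  fix x :: real assume "x \<ge> 1"
  define y where "y = b * x powr \<gamma>"
  have "y \<ge> 0" unfolding y_def using \<open>b > 0\<close> by simp
  have "(y / real n) ^ n \<le> exp (y / real n) ^ n"
    using \<open>y \<ge> 0\<close> by (intro power_mono) (auto intro: order_trans[OF _ exp_ge_add_one_self])
  also have "\<dots> = exp y" using \<open>n \<ge> 1\<close> by (simp flip: exp_of_nat_mult)
  finally have y_le: "(y / real n) ^ n \<le> exp y" .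
  have "x powr p \<le> x powr (real n * \<gamma>)" using \<open>x \<ge> 1\<close> p_le by (simp add: powr_mono)
  also have "\<dots> = (real n / b) ^ n * (y / real n) ^ n"
    using \<open>x \<ge> 1\<close> \<open>b > 0\<close> \<open>n \<ge> 1\<close> unfolding y_def
    by (simp add: powr_powr[symmetric] powr_realpow mult.commute flip: power_mult_distrib)
  also have "\<dots> \<le> (real n / b) ^ n * exp y" using y_le \<open>b > 0\<close> by (intro mult_left_mono) auto
  finally show "x powr p * exp (- (b * x powr \<gamma>)) \<le> (real n / b) ^ n"
    unfolding y_def[symmetric] by (simp add: exp_minus field_simps)
qed

section \<open>The equilibrium\<close>

lemma rate_one [simp]: "rate Rs \<gamma> 1 = Rs" "rate Rs \<gamma> (Suc 0) = Rs"
  by (simp_all add: rate_def)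

lemma rate_pos: "Rs > 0 \<Longrightarrow> k \<ge> 1 \<Longrightarrow> rate Rs \<gamma> k > 0"
  by (simp add: rate_def)

lemma rate_mono: "Rs > 0 \<Longrightarrow> \<gamma> > 0 \<Longrightarrow> 1 \<le> j \<Longrightarrow> j \<le> k \<Longrightarrow> rate Rs \<gamma> j \<le> rate Rs \<gamma> k"
  by (simp add: rate_def powr_mono2)

lemma rhs_one: "rhs A Rs \<gamma> s c 1 = - A * (c 1)\<^sup>2 + s 1 - Rs * c 1"
  and rhs_two: "rhs A Rs \<gamma> s c 2 = A / 2 * (c 1)\<^sup>2 + s 2 - rate Rs \<gamma> 2 * c 2"
  and rhs_ge_three: "k \<ge> 3 \<Longrightarrow> rhs A Rs \<gamma> s c k = s k - rate Rs \<gamma> k * c k"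
  by (simp_all add: rhs_def)

locale dimer_system =
  fixes A Rs \<gamma> :: real and s :: "nat \<Rightarrow> real"
  assumes A_pos: "A > 0" and R_pos: "Rs > 0" and g_pos: "\<gamma> > 0"
    and s_nonneg: "\<And>k. k \<ge> 1 \<Longrightarrow> s k \<ge> 0"
begin

abbreviation Q where "Q \<equiv> Qeq A Rs \<gamma> s"
abbreviation r where "r \<equiv> rate Rs \<gamma>"
abbreviation \<kappa> where "\<kappa> \<equiv> kappa_const A Rs \<gamma> s"

text \<open>Square root of the discriminant of the quadratic \<open>A q\<^sup>2 + Rs q = s 1\<close>.\<close>
abbreviation S where "S \<equiv> sqrt (Rs\<^sup>2 + 4 * A * s 1)"

lemma S_ge_R: "S \<ge> Rs"
  using A_pos R_pos s_nonneg[of 1] by (intro real_le_rsqrt) (simp add: power2_eq_square)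

lemma sqrt_discriminant_div: "sqrt (Rs\<^sup>2 / A\<^sup>2 + 4 * s 1 / A) = S / A"
proof -
  have "Rs\<^sup>2 / A\<^sup>2 + 4 * s 1 / A = (Rs\<^sup>2 + 4 * A * s 1) / A\<^sup>2"
    using A_pos by (simp add: field_simps power2_eq_square)
  then show ?thesis using A_pos by (simp add: real_sqrt_divide)
qed

lemma Q_one: "Q 1 = (S - Rs) / (2 * A)"
proof -
  have "Q 1 = 1 / 2 * sqrt (Rs\<^sup>2 / A\<^sup>2 + 4 * s 1 / A) - Rs / (2 * A)"
    by (simp add: Qeq_def Let_def)
  then show ?thesis using A_pos unfolding sqrt_discriminant_div by (simp add: field_simps)
qed

lemma Q_two: "Q 2 = A / (2 * r 2) * (Q 1)\<^sup>2 + s 2 / r 2"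
  by (simp add: Qeq_def Let_def)

lemma Q_ge_three: "k \<ge> 3 \<Longrightarrow> Q k = s k / r k"
  by (simp add: Qeq_def Let_def)

lemma Q_one_root: "A * (Q 1)\<^sup>2 + Rs * Q 1 = s 1"
proof -
  have "S\<^sup>2 = Rs\<^sup>2 + 4 * A * s 1" using A_pos s_nonneg[of 1] by simp
  then show ?thesis unfolding Q_one using A_pos by (simp add: field_simps power2_eq_square)
qed

lemma Q_one_unique_root:
  assumes "q \<ge> 0" "A * q\<^sup>2 + Rs * q = s 1"
  shows "q = Q 1"
proof -
  have "(2 * A * q + Rs)\<^sup>2 = 4 * A * (A * q\<^sup>2 + Rs * q) + Rs\<^sup>2"
    by (simp add: power2_eq_square algebra_simps)
  then have "(2 * A * q + Rs)\<^sup>2 = Rs\<^sup>2 + 4 * A * s 1" using assms(2) by simp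
  then have "2 * A * q + Rs = S" using A_pos R_pos \<open>q \<ge> 0\<close> by (simp add: real_sqrt_unique)
  then show ?thesis unfolding Q_one using A_pos by (simp add: field_simps)
qed

lemma Q_nonneg:
  assumes "k \<ge> 1"
  shows "Q k \<ge> 0"
proof -
  consider "k = 1" | "k = 2" | "k \<ge> 3" using assms by linarith
  then show ?thesis
  proof cases
    case 1
    have "Q 1 \<ge> 0" unfolding Q_one using S_ge_R A_pos by simp
    with 1 show ?thesis by simp
  next
    case 2
    have "Q 2 \<ge> 0" unfolding Q_two using A_pos rate_pos[OF R_pos, of 2 \<gamma>] s_nonneg[of 2] by simp
    with 2 show ?thesis by simp
  next
    case 3
    then show ?thesis using Q_ge_three rate_pos[OF R_pos, of k \<gamma>] s_nonneg[of k] by simp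
  qed
qed

lemma equilibrium_unique:
  "is_equilibrium A Rs \<gamma> s Q \<and> nonneg_seq Q \<and>
   (\<forall>q. nonneg_seq q \<and> is_equilibrium A Rs \<gamma> s q \<longrightarrow> (\<forall>k\<ge>1. q k = Q k))"
proof (intro conjI allI impI)
  have "r 2 > 0" using rate_pos[OF R_pos] by simp
  then have "rhs A Rs \<gamma> s Q k = 0" if "k \<ge> 1" for k
    using that Q_one_root rate_pos[OF R_pos, of k \<gamma>] by (cases "k \<le> 2")
      (auto simp: rhs_def Q_two Q_ge_three field_simps le_Suc_eq)
  then show "is_equilibrium A Rs \<gamma> s Q" by (simp add: is_equilibrium_def)
  show "nonneg_seq Q" using Q_nonneg by (simp add: nonneg_seq_def)
  fix q k assume "nonneg_seq q \<and> is_equilibrium A Rs \<gamma> s q" "(k::nat) \<ge> 1"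
  then have eq: "\<And>j. j \<ge> 1 \<Longrightarrow> rhs A Rs \<gamma> s q j = 0" and "q 1 \<ge> 0"
    by (simp_all add: is_equilibrium_def nonneg_seq_def)
  moreover have "A * (q 1)\<^sup>2 + Rs * q 1 = s 1" using eq[of 1] by (simp add: rhs_def)
  ultimately have "q 1 = Q 1" by (intro Q_one_unique_root)
  consider "k = 1" | "k = 2" | "k \<ge> 3" using \<open>k \<ge> 1\<close> by linarith
  then show "q k = Q k"
  proof cases
    case 2
    then show ?thesis using eq[of 2] \<open>q 1 = Q 1\<close> \<open>r 2 > 0\<close> by (simp add: rhs_def Q_two field_simps)
  next
    case 3
    then show ?thesis
      using eq[of k] rate_pos[OF R_pos, of k \<gamma>] by (simp add: rhs_def Q_ge_three field_simps)
  qed (use \<open>q 1 = Q 1\<close> in simp)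
qed

section \<open>Decay towards the equilibrium\<close>

lemma kappa_eq: "\<kappa> = min (S / 2) (min (r 2 / 2) (3 powr \<gamma> / 2 * Rs))"
proof -
  have "alpha_const A Rs \<gamma> s = A / S"
    unfolding alpha_const_def rate_one sqrt_discriminant_div by simp
  moreover have "S > 0" using S_ge_R R_pos by linarith
  ultimately show ?thesis using A_pos by (simp add: kappa_const_def)
qed

lemma kappa_pos: "\<kappa> > 0"
proof -
  have "S / 2 > 0" using S_ge_R R_pos by linarith
  moreover have "r 2 / 2 > 0" using rate_pos[OF R_pos] by simp
  moreover have "3 powr \<gamma> / 2 * Rs > 0" using R_pos by simp
  ultimately show ?thesis unfolding kappa_eq by simp
qed

lemma kappa_less_mode_one_rate: "\<kappa> < A * Q 1 + Rs"
proof -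
  have "A * Q 1 + Rs = S / 2 + Rs / 2" unfolding Q_one using A_pos by (simp add: field_simps)
  then show ?thesis using kappa_eq R_pos by linarith
qed

lemma kappa_le_half_rate_two: "\<kappa> \<le> r 2 / 2"
  using kappa_eq by linarith

lemma two_kappa_le_rate:
  assumes "k \<ge> 3"
  shows "2 * \<kappa> \<le> r k"
proof -
  have "\<kappa> \<le> 3 powr \<gamma> / 2 * Rs" using kappa_eq by linarith
  then have "2 * \<kappa> \<le> r 3" by (simp add: rate_def algebra_simps)
  also have "\<dots> \<le> r k" using assms by (intro rate_mono[OF R_pos g_pos]) auto
  finally show ?thesis .
qed

context
  fixes cin :: "nat \<Rightarrow> real" and c :: "real \<Rightarrow> nat \<Rightarrow> real"
  assumes solution: "is_solution A Rs \<gamma> s cin c"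
begin

lemma solution_initial: "k \<ge> 1 \<Longrightarrow> c 0 k = cin k"
  and solution_nonneg: "t \<ge> 0 \<Longrightarrow> k \<ge> 1 \<Longrightarrow> c t k \<ge> 0"
  and solution_deriv: "t \<ge> 0 \<Longrightarrow> k \<ge> 1 \<Longrightarrow>
    ((\<lambda>\<tau>. c \<tau> k) has_real_derivative rhs A Rs \<gamma> s (c t) k) (at t within {0..})"
  using solution by (simp_all add: is_solution_def)

text \<open>Nonnegativity of \<open>c t 1\<close> makes the linearised rate \<open>A Q 1 + Rs\<close> a global decay rate.\<close>

lemma mode_one_decay:
  assumes "t \<ge> 0"
  shows "\<bar>c t 1 - Q 1\<bar> \<le> \<bar>cin 1 - Q 1\<bar> * exp (- (A * Q 1 + Rs) * t)"
proof -
  have dissipative: "(c \<tau> 1 - Q 1) * rhs A Rs \<gamma> s (c \<tau>) 1 \<le> - (A * Q 1 + Rs) * (c \<tau> 1 - Q 1)\<^sup>2"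
    if "\<tau> \<ge> 0" for \<tau>
  proof -
    have "(c \<tau> 1 - Q 1) * rhs A Rs \<gamma> s (c \<tau>) 1
        = - (A * Q 1 + Rs) * (c \<tau> 1 - Q 1)\<^sup>2 - A * c \<tau> 1 * (c \<tau> 1 - Q 1)\<^sup>2"
      unfolding rhs_one Q_one_root[symmetric] by (simp add: power2_eq_square algebra_simps)
    moreover have "A * c \<tau> 1 * (c \<tau> 1 - Q 1)\<^sup>2 \<ge> 0"
      using A_pos solution_nonneg[OF that, of 1] by simp
    ultimately show ?thesis by linarith
  qed
  show ?thesis
    using dissipative_decay[where x = "\<lambda>\<tau>. c \<tau> 1", OF solution_deriv dissipative assms]
      solution_initial[of 1] by simp
qed

lemma high_mode_decay:
  assumes "k \<ge> 3" "t \<ge> 0"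
  shows "\<bar>c t k - Q k\<bar> \<le> \<bar>cin k - Q k\<bar> * exp (- r k * t)"
proof -
  have "s k = r k * Q k" using assms rate_pos[OF R_pos, of k \<gamma>] by (simp add: Q_ge_three)
  then have dissipative: "(c \<tau> k - Q k) * rhs A Rs \<gamma> s (c \<tau>) k \<le> - r k * (c \<tau> k - Q k)\<^sup>2"
    for \<tau> using assms by (simp add: rhs_ge_three power2_eq_square algebra_simps)
  show ?thesis
    using dissipative_decay[where x = "\<lambda>\<tau>. c \<tau> k", OF solution_deriv dissipative \<open>t \<ge> 0\<close>]
      solution_initial[of k] assms by simp
qed

lemma dimer_forcing_decay:
  assumes "t \<ge> 0"
  shows "\<bar>A / 2 * ((c t 1)\<^sup>2 - (Q 1)\<^sup>2)\<bar>
    \<le> A / 2 * (\<bar>cin 1 - Q 1\<bar> + 2 * Q 1) * \<bar>cin 1 - Q 1\<bar> * exp (- (A * Q 1 + Rs) * t)"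
proof -
  define D where "D = \<bar>cin 1 - Q 1\<bar>"
  define a where "a = A * Q 1 + Rs"
  have dev: "\<bar>c t 1 - Q 1\<bar> \<le> D * exp (- a * t)"
    using mode_one_decay[OF \<open>t \<ge> 0\<close>] unfolding D_def a_def .
  have "a > 0" using kappa_pos kappa_less_mode_one_rate unfolding a_def by linarith
  then have "D * exp (- a * t) \<le> D" using \<open>t \<ge> 0\<close> by (intro mult_left_le) (auto simp: D_def)
  then have "\<bar>c t 1 + Q 1\<bar> \<le> D + 2 * Q 1"
    using dev solution_nonneg[OF \<open>t \<ge> 0\<close>, of 1] Q_nonneg[of 1] by linarith
  then have "\<bar>c t 1 + Q 1\<bar> * \<bar>c t 1 - Q 1\<bar> \<le> (D + 2 * Q 1) * (D * exp (- a * t))"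
    using dev by (intro mult_mono) auto
  moreover have "\<bar>(c t 1)\<^sup>2 - (Q 1)\<^sup>2\<bar> = \<bar>c t 1 + Q 1\<bar> * \<bar>c t 1 - Q 1\<bar>"
    by (simp add: power2_eq_square algebra_simps flip: abs_mult)
  ultimately have "\<bar>(c t 1)\<^sup>2 - (Q 1)\<^sup>2\<bar> \<le> (D + 2 * Q 1) * D * exp (- a * t)"
    by (simp add: mult.assoc)
  then show ?thesis
    using A_pos unfolding D_def[symmetric] a_def[symmetric] by (simp add: abs_mult mult_left_mono mult.assoc)
qed

lemma weighted_high_mode_decay:
  assumes "k \<ge> 3" "t \<ge> 1" and M: "\<And>x. x \<ge> 1 \<Longrightarrow> x powr (\<mu> - 1) * exp (- (Rs / 2 * x powr \<gamma>)) \<le> M"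
  shows "real k powr \<mu> * \<bar>c t k - Q k\<bar> \<le> (M * (real k * cin k) + real k powr \<mu> * s k / Rs) * exp (- \<kappa> * t)"
proof -
  define X where "X = real k"
  have "X \<ge> 1" unfolding X_def using assms by simp
  have "cin k \<ge> 0" using solution_initial[of k] solution_nonneg[of 0 k] assms by simp
  have "s k \<ge> 0" "Q k \<ge> 0" using s_nonneg Q_nonneg assms by auto
  have "Rs \<le> r k" using rate_mono[OF R_pos g_pos, of 1 k] assms by simp
  have "2 * \<kappa> \<le> r k" using two_kappa_le_rate assms by simp
  have "\<bar>cin k - Q k\<bar> \<le> cin k + Q k" using \<open>cin k \<ge> 0\<close> \<open>Q k \<ge> 0\<close> by linarith
  moreover have "\<bar>c t k - Q k\<bar> \<le> \<bar>cin k - Q k\<bar> * exp (- r k * t)"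
    using high_mode_decay assms by simp
  ultimately have "\<bar>c t k - Q k\<bar> \<le> (cin k + Q k) * exp (- r k * t)"
    by (meson exp_ge_zero mult_right_mono order_trans)
  then have "X powr \<mu> * \<bar>c t k - Q k\<bar> \<le> X powr \<mu> * ((cin k + Q k) * exp (- r k * t))"
    unfolding X_def by (intro mult_left_mono) simp_all
  also have "\<dots> = X powr \<mu> * cin k * exp (- r k * t) + X powr \<mu> * Q k * exp (- r k * t)"
    by (simp add: algebra_simps)
  also have "X powr \<mu> * cin k * exp (- r k * t) \<le> M * (X * cin k) * exp (- \<kappa> * t)"
  proof -
    have "X powr \<mu> * cin k * exp (- r k * t) \<le> X powr \<mu> * cin k * (exp (- r k / 2) * exp (- \<kappa> * t))"
      using exp_neg_split_le[OF less_imp_le[OF kappa_pos] \<open>2 * \<kappa> \<le> r k\<close> \<open>t \<ge> 1\<close>] \<open>cin k \<ge> 0\<close>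
      by (intro mult_left_mono) simp_all
    also have "\<dots> = (X * cin k) * (X powr (\<mu> - 1) * exp (- (Rs / 2 * X powr \<gamma>))) * exp (- \<kappa> * t)"
      using \<open>X \<ge> 1\<close> powr_add[of X 1 "\<mu> - 1"] unfolding X_def rate_def by (simp add: algebra_simps)
    also have "\<dots> \<le> (X * cin k) * M * exp (- \<kappa> * t)"
      using M[OF \<open>X \<ge> 1\<close>] \<open>X \<ge> 1\<close> \<open>cin k \<ge> 0\<close> by (intro mult_right_mono mult_left_mono) simp_all
    finally show ?thesis by (simp add: algebra_simps)
  qed
  also have "X powr \<mu> * Q k * exp (- r k * t) \<le> X powr \<mu> * s k / Rs * exp (- \<kappa> * t)"
  proof (rule mult_mono)
    show "X powr \<mu> * Q k \<le> X powr \<mu> * s k / Rs"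
      using Q_ge_three[OF \<open>k \<ge> 3\<close>] \<open>Rs \<le> r k\<close> R_pos \<open>s k \<ge> 0\<close>
      by (simp add: divide_left_mono mult_left_mono)
    show "exp (- r k * t) \<le> exp (- \<kappa> * t)"
      using \<open>2 * \<kappa> \<le> r k\<close> kappa_pos \<open>t \<ge> 1\<close> by (simp add: mult_right_mono)
  qed (use R_pos \<open>s k \<ge> 0\<close> in auto)
  finally show ?thesis unfolding X_def by (simp add: algebra_simps)
qed

lemma weighted_low_mode_decay:
  assumes "k \<in> {1, 2}" "t \<ge> 0" and mode_two: "\<bar>c t 2 - Q 2\<bar> \<le> B * exp (- \<kappa> * t)"
  shows "real k powr \<mu> * \<bar>c t k - Q k\<bar> \<le> max \<bar>cin 1 - Q 1\<bar> (2 powr \<mu> * B) * exp (- \<kappa> * t)"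
proof (cases "k = 1")
  case True
  have "\<kappa> * t \<le> (A * Q 1 + Rs) * t"
    using kappa_less_mode_one_rate \<open>t \<ge> 0\<close> by (intro mult_right_mono) simp_all
  then have "exp (- (A * Q 1 + Rs) * t) \<le> exp (- \<kappa> * t)" by (simp add: algebra_simps)
  then have "\<bar>c t 1 - Q 1\<bar> \<le> \<bar>cin 1 - Q 1\<bar> * exp (- \<kappa> * t)"
    using mode_one_decay[OF \<open>t \<ge> 0\<close>] by (meson abs_ge_zero mult_left_mono order_trans)
  also have "\<dots> \<le> max \<bar>cin 1 - Q 1\<bar> (2 powr \<mu> * B) * exp (- \<kappa> * t)"
    by (intro mult_right_mono) simp_all
  finally show ?thesis using True by simp
next
  case False
  then have "k = 2" using assms(1) by simp
  have "2 powr \<mu> * \<bar>c t 2 - Q 2\<bar> \<le> 2 powr \<mu> * B * exp (- \<kappa> * t)"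
    using mode_two by (simp add: mult.assoc)
  also have "\<dots> \<le> max \<bar>cin 1 - Q 1\<bar> (2 powr \<mu> * B) * exp (- \<kappa> * t)"
    by (intro mult_right_mono) simp_all
  finally show ?thesis using \<open>k = 2\<close> by simp
qed

lemma weighted_deviation_bound:
  assumes "t \<ge> 1" "k \<ge> 1"
    and mode_two: "\<bar>c t 2 - Q 2\<bar> \<le> B * exp (- \<kappa> * t)"
    and M: "\<And>x. x \<ge> 1 \<Longrightarrow> x powr (\<mu> - 1) * exp (- (Rs / 2 * x powr \<gamma>)) \<le> M" "M \<ge> 0"
  shows "real k powr \<mu> * \<bar>c t k - Q k\<bar>
    \<le> ((if k \<le> 2 then max \<bar>cin 1 - Q 1\<bar> (2 powr \<mu> * B) else 0)
        + (M * (real k * cin k) + real k powr \<mu> * s k / Rs)) * exp (- \<kappa> * t)"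
    (is "_ \<le> (?B + ?rest) * _")
proof (cases "k \<le> 2")
  case True
  have "cin k = c 0 k" using solution_initial[OF \<open>k \<ge> 1\<close>] by simp
  then have "?rest \<ge> 0"
    using solution_nonneg[of 0 k] s_nonneg[of k] \<open>k \<ge> 1\<close> M(2) R_pos by simp
  then have le_rest: "max \<bar>cin 1 - Q 1\<bar> (2 powr \<mu> * B) * exp (- \<kappa> * t)
      \<le> (max \<bar>cin 1 - Q 1\<bar> (2 powr \<mu> * B) + ?rest) * exp (- \<kappa> * t)"
    by (simp add: mult_right_mono)
  have "k \<in> {1, 2}" using True \<open>k \<ge> 1\<close> by auto
  then have "real k powr \<mu> * \<bar>c t k - Q k\<bar> \<le> max \<bar>cin 1 - Q 1\<bar> (2 powr \<mu> * B) * exp (- \<kappa> * t)"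
    using \<open>t \<ge> 1\<close> by (intro weighted_low_mode_decay mode_two) simp_all
  then show ?thesis using order_trans[OF _ le_rest] True by simp
next
  case False
  then show ?thesis using weighted_high_mode_decay[of k t \<mu> M] M(1) \<open>t \<ge> 1\<close> by simp
qed

end

lemma mode_two_decay:
  fixes cin :: "nat \<Rightarrow> real"
  obtains B where "\<And>c t. is_solution A Rs \<gamma> s cin c \<Longrightarrow> t \<ge> 0 \<Longrightarrow>
    \<bar>c t 2 - Q 2\<bar> \<le> B * exp (- \<kappa> * t)"
proof
  define G where "G = A / 2 * (\<bar>cin 1 - Q 1\<bar> + 2 * Q 1) * \<bar>cin 1 - Q 1\<bar>"
  fix c :: "real \<Rightarrow> nat \<Rightarrow> real" and t :: real
  assume sol: "is_solution A Rs \<gamma> s cin c" and "t \<ge> 0"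
  let ?g = "\<lambda>\<tau>. A / 2 * ((c \<tau> 1)\<^sup>2 - (Q 1)\<^sup>2)"
  have "r 2 > 0" using rate_pos[OF R_pos] by simp
  have "s 2 = r 2 * Q 2 - A / 2 * (Q 1)\<^sup>2" unfolding Q_two using \<open>r 2 > 0\<close> by (simp add: field_simps)
  then have "rhs A Rs \<gamma> s (c \<tau>) 2 = ?g \<tau> - r 2 * (c \<tau> 2 - Q 2)" for \<tau>
    by (simp add: rhs_two algebra_simps)
  then have deriv: "((\<lambda>\<tau>. c \<tau> 2) has_real_derivative ?g \<tau> - r 2 * (c \<tau> 2 - Q 2)) (at \<tau> within {0..})"
    if "\<tau> \<ge> 0" for \<tau>
    using solution_deriv[OF sol that, of 2] by simp
  have forcing: "\<bar>?g \<tau>\<bar> \<le> G * exp (- (A * Q 1 + Rs) * \<tau>)" if "\<tau> \<ge> 0" for \<tau>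
    using dimer_forcing_decay[OF sol that] unfolding G_def .
  show "\<bar>c t 2 - Q 2\<bar>
      \<le> sqrt ((cin 2 - Q 2)\<^sup>2 + G\<^sup>2 / (2 * r 2 * (A * Q 1 + Rs - \<kappa>))) * exp (- \<kappa> * t)"
    using forced_linear_decay[OF deriv forcing \<open>r 2 > 0\<close> kappa_le_half_rate_two
        kappa_less_mode_one_rate \<open>t \<ge> 0\<close>] solution_initial[OF sol, of 2]
    by simp
qed

lemma moment_decay:
  assumes s_moments: "\<And>\<nu>. \<nu> \<ge> 0 \<Longrightarrow> (\<lambda>k. real k powr \<nu> * s k) summable_on {1..}"
    and cin_moment: "(\<lambda>k. real k * cin k) summable_on {1..}" and "\<mu> \<ge> 1"
  shows "\<exists>K. \<forall>c. is_solution A Rs \<gamma> s cin c \<longrightarrow>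
    (\<forall>t\<ge>1. (\<lambda>k. real k powr \<mu> * \<bar>c t k - Q k\<bar>) summable_on {1..} \<and>
            (\<Sum>\<^sub>\<infinity>k\<in>{1..}. real k powr \<mu> * \<bar>c t k - Q k\<bar>) \<le> K * exp (- \<kappa> * t))"
proof -
  obtain B where B: "\<And>c t. is_solution A Rs \<gamma> s cin c \<Longrightarrow> t \<ge> 0 \<Longrightarrow>
      \<bar>c t 2 - Q 2\<bar> \<le> B * exp (- \<kappa> * t)"
    using mode_two_decay by blast
  obtain M where M: "M \<ge> 0" "\<And>x. x \<ge> 1 \<Longrightarrow> x powr (\<mu> - 1) * exp (- (Rs / 2 * x powr \<gamma>)) \<le> M"
    using powr_mult_exp_neg_powr_bounded[of "Rs / 2" \<gamma> "\<mu> - 1"] R_pos g_pos by auto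
  define h where "h k = (if k \<le> 2 then max \<bar>cin 1 - Q 1\<bar> (2 powr \<mu> * B) else 0)
      + (M * (real k * cin k) + real k powr \<mu> * s k / Rs)" for k
  have "(\<lambda>k::nat. if k \<le> 2 then max \<bar>cin 1 - Q 1\<bar> (2 powr \<mu> * B) else 0) summable_on {1, 2}"
    by simp
  then have "(\<lambda>k::nat. if k \<le> 2 then max \<bar>cin 1 - Q 1\<bar> (2 powr \<mu> * B) else 0) summable_on {1..}"
    by (rule summable_on_cong_neutral[THEN iffD1, rotated -1]) auto
  moreover have "(\<lambda>k. real k powr \<mu> * s k / Rs) summable_on {1..}"
    using summable_on_cmult_left[OF s_moments[of \<mu>], of "1 / Rs"] \<open>\<mu> \<ge> 1\<close> by simp
  ultimately have h_summable: "h summable_on {1..}"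
    unfolding h_def by (intro summable_on_add summable_on_cmult_right cin_moment)
  have "(\<lambda>k. real k powr \<mu> * \<bar>c t k - Q k\<bar>) summable_on {1..} \<and>
      (\<Sum>\<^sub>\<infinity>k\<in>{1..}. real k powr \<mu> * \<bar>c t k - Q k\<bar>) \<le> infsum h {1..} * exp (- \<kappa> * t)"
    if sol: "is_solution A Rs \<gamma> s cin c" and "t \<ge> 1" for c t
  proof
    have bound: "real k powr \<mu> * \<bar>c t k - Q k\<bar> \<le> h k * exp (- \<kappa> * t)" if "k \<in> {1..}" for k
      using weighted_deviation_bound[OF sol \<open>t \<ge> 1\<close> _ B[OF sol] M(2,1)] that \<open>t \<ge> 1\<close>
      unfolding h_def by simp
    have h_scaled: "(\<lambda>k. h k * exp (- \<kappa> * t)) summable_on {1..}"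
      by (rule summable_on_cmult_left[OF h_summable])
    show summable: "(\<lambda>k. real k powr \<mu> * \<bar>c t k - Q k\<bar>) summable_on {1..}"
      by (rule summable_on_comparison_test[OF h_scaled]) (use bound in auto)
    have "(\<Sum>\<^sub>\<infinity>k\<in>{1..}. real k powr \<mu> * \<bar>c t k - Q k\<bar>) \<le> (\<Sum>\<^sub>\<infinity>k\<in>{1..}. h k * exp (- \<kappa> * t))"
      by (rule infsum_mono[OF summable h_scaled bound])
    then show "(\<Sum>\<^sub>\<infinity>k\<in>{1..}. real k powr \<mu> * \<bar>c t k - Q k\<bar>) \<le> infsum h {1..} * exp (- \<kappa> * t)"
      by (simp add: infsum_cmult_left')
  qed
  then show ?thesis by blast
qed

lemma Q_one_lower_bound:
  assumes "A * s 1 \<ge> 4 * Rs\<^sup>2"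
  shows "3 * Rs \<le> 2 * A * Q 1"
proof -
  have "S\<^sup>2 = Rs\<^sup>2 + 4 * A * s 1" using A_pos s_nonneg[of 1] by simp
  moreover have "(4 * Rs)\<^sup>2 = 16 * Rs\<^sup>2" by (simp add: power_mult_distrib)
  ultimately have "(4 * Rs)\<^sup>2 \<le> S\<^sup>2" using assms zero_le_power2[of Rs] by linarith
  moreover have "S \<ge> 0" using S_ge_R R_pos by linarith
  ultimately have "4 * Rs \<le> S" by (rule power2_le_imp_le)
  moreover have "2 * A * Q 1 = S - Rs" unfolding Q_one using A_pos by simp
  ultimately show ?thesis by linarith
qed

lemma moment_lower_bound:
  assumes "A * s 1 \<ge> 4 * Rs\<^sup>2" "\<mu> \<ge> 1" "nonneg_seq c"
    and summable: "(\<lambda>l. real l powr (\<mu> + \<beta>) * (c l + Q l)) summable_on {1..}"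
  shows "2 * A * (C_const \<mu> + 2) * (\<Sum>\<^sub>\<infinity>l\<in>{1..}. real l powr (\<mu> + \<beta>) * (c l + Q l)) - Rs
      \<ge> (3 * (C_const \<mu> + 2) - 1) * Rs"
    and "(3 * (C_const \<mu> + 2) - 1) * Rs > 0"
proof -
  let ?f = "\<lambda>l. real l powr (\<mu> + \<beta>) * (c l + Q l)"
  have "C_const \<mu> \<ge> 0" using \<open>\<mu> \<ge> 1\<close> unfolding C_const_def by (intro mult_nonneg_nonneg) auto
  then show "(3 * (C_const \<mu> + 2) - 1) * Rs > 0" using R_pos by simp
  have "c 1 \<ge> 0" using \<open>nonneg_seq c\<close> by (simp add: nonneg_seq_def)
  have "?f l \<ge> 0" if "l \<in> {1..}" for l
    using that \<open>nonneg_seq c\<close> Q_nonneg[of l] by (simp add: nonneg_seq_def)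
  then have "infsum ?f {1} \<le> infsum ?f {1..}"
    by (intro infsum_mono_neutral summable) auto
  then have "Q 1 \<le> infsum ?f {1..}" using \<open>c 1 \<ge> 0\<close> by simp
  then have "2 * A * Q 1 \<le> 2 * A * infsum ?f {1..}" using A_pos by simp
  then have "3 * Rs \<le> 2 * A * infsum ?f {1..}" using Q_one_lower_bound[OF assms(1)] by linarith
  then have "(C_const \<mu> + 2) * (3 * Rs) \<le> (C_const \<mu> + 2) * (2 * A * infsum ?f {1..})"
    using \<open>C_const \<mu> \<ge> 0\<close> by (intro mult_left_mono) auto
  then show "2 * A * (C_const \<mu> + 2) * infsum ?f {1..} - Rs \<ge> (3 * (C_const \<mu> + 2) - 1) * Rs"
    by (simp add: algebra_simps)
qed

end

theorem mainTheorem16: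
  fixes A Rs \<gamma> :: real and s :: "nat \<Rightarrow> real"
  assumes A_pos: "A > 0" and R_pos: "Rs > 0" and g_pos: "\<gamma> > 0"
    and s_nonneg: "\<forall>k\<ge>1. s k \<ge> 0"
    and s_mom: "\<forall>\<mu>\<ge>0. (\<lambda>k. real k powr \<mu> * s k) summable_on {1..}"
  shows
    "(is_equilibrium A Rs \<gamma> s (Qeq A Rs \<gamma> s) \<and> nonneg_seq (Qeq A Rs \<gamma> s) \<and>
      (\<forall>q. nonneg_seq q \<and> is_equilibrium A Rs \<gamma> s q \<longrightarrow> (\<forall>k\<ge>1. q k = Qeq A Rs \<gamma> s k)))
   \<and>
    (\<forall>cin \<mu>. nonneg_seq cin \<and> (\<lambda>k. real k * cin k) summable_on {1..} \<and> \<mu> \<ge> 1 \<longrightarrow>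
       (\<exists>K. \<forall>c. is_solution A Rs \<gamma> s cin c \<longrightarrow>
          (\<forall>t\<ge>1. (\<lambda>k. real k powr \<mu> * \<bar>c t k - Qeq A Rs \<gamma> s k\<bar>) summable_on {1..} \<and>
                  (\<Sum>\<^sub>\<infinity>k\<in>{1..}. real k powr \<mu> * \<bar>c t k - Qeq A Rs \<gamma> s k\<bar>)
                    \<le> K * exp (- kappa_const A Rs \<gamma> s * t))))
   \<and>
    (A * s 1 \<ge> 4 * Rs\<^sup>2 \<longrightarrow>
      (\<forall>\<mu> \<beta> c. \<mu> \<ge> 1 \<and> 0 \<le> \<beta> \<and> \<beta> \<le> 1 \<and> nonneg_seq c \<and>
         (\<lambda>l. real l powr (\<mu> + \<beta>) * (c l + Qeq A Rs \<gamma> s l)) summable_on {1..} \<longrightarrow>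
         2 * A * (C_const \<mu> + 2) * (\<Sum>\<^sub>\<infinity>l\<in>{1..}. real l powr (\<mu> + \<beta>) * (c l + Qeq A Rs \<gamma> s l)) - Rs
           \<ge> (3 * (C_const \<mu> + 2) - 1) * Rs
         \<and> (3 * (C_const \<mu> + 2) - 1) * Rs > 0))"
proof -
  interpret dimer_system A Rs \<gamma> s
    using A_pos R_pos g_pos s_nonneg by unfold_locales auto
  have s_moments: "\<And>\<nu>. \<nu> \<ge> 0 \<Longrightarrow> (\<lambda>k. real k powr \<nu> * s k) summable_on {1..}"
    using s_mom by blast
  show ?thesis
  proof (intro conjI allI impI)
    fix cin :: "nat \<Rightarrow> real" and \<mu> :: real
    assume "nonneg_seq cin \<and> (\<lambda>k. real k * cin k) summable_on {1..} \<and> \<mu> \<ge> 1"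
    then show "\<exists>K. \<forall>c. is_solution A Rs \<gamma> s cin c \<longrightarrow>
          (\<forall>t\<ge>1. (\<lambda>k. real k powr \<mu> * \<bar>c t k - Qeq A Rs \<gamma> s k\<bar>) summable_on {1..} \<and>
                  (\<Sum>\<^sub>\<infinity>k\<in>{1..}. real k powr \<mu> * \<bar>c t k - Qeq A Rs \<gamma> s k\<bar>)
                    \<le> K * exp (- kappa_const A Rs \<gamma> s * t))"
      using moment_decay[OF s_moments] by blast
  qed (use equilibrium_unique moment_lower_bound in auto)
qed

end
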